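(* $\mathsf{N}=\mathsf{MS4}+\Box\exists p\to\neg\Box\forall\neg\Box p=\mathsf{MS4}+\Box\forall\Diamond p\to\Diamond\forall p$, where $\mathsf{N}=\mathsf{MS4}+\Box\exists p\to\Diamond\exists\Box p$.
   Context: $\mathsf{MS4}$ is the smallest set of formulas in the classical bimodal language $\mathcal{L}_{\Box\forall}$ containing all classical tautologies, the $\mathsf{S4}$ axioms for $\Box$, the $\mathsf{S5}$ axioms for $\forall$, and $\Box\forall p\to\forall\Box p$, closed under modus ponens, substitution, $\Box$-necessitation and $\forall$-necessitation; $\Diamond=\neg\Box\neg$, $\exists=\neg\forall\neg$. For a formula $\chi$, $\mathsf{MS4}+\chi$ is the smallest set containing $\mathsf{MS4}$ and $\chi$ closed under these rules. *)

theory Defs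
  imports Main
begin

datatype fm = Var nat | Bot | Imp fm fm | Box fm | All fm

definition Neg :: "fm \<Rightarrow> fm" where "Neg a = Imp a Bot"
definition Dia :: "fm \<Rightarrow> fm" where "Dia a = Neg (Box (Neg a))"
definition Ex :: "fm \<Rightarrow> fm" where "Ex a = Neg (All (Neg a))"

fun peval :: "(fm \<Rightarrow> bool) \<Rightarrow> fm \<Rightarrow> bool" where
  "peval v (Var n) = v (Var n)"
| "peval v Bot = False"
| "peval v (Imp a b) = (peval v a \<longrightarrow> peval v b)"
| "peval v (Box a) = v (Box a)"
| "peval v (All a) = v (All a)"

definition taut :: "fm \<Rightarrow> bool" where "taut a = (\<forall>v. peval v a)"

fun subst :: "(nat \<Rightarrow> fm) \<Rightarrow> fm \<Rightarrow> fm" where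
  "subst s (Var n) = s n"
| "subst s Bot = Bot"
| "subst s (Imp a b) = Imp (subst s a) (subst s b)"
| "subst s (Box a) = Box (subst s a)"
| "subst s (All a) = All (subst s a)"

abbreviation p :: fm where "p \<equiv> Var 0"
abbreviation q :: fm where "q \<equiv> Var 1"

definition MS4_axioms :: "fm set" where
  "MS4_axioms = {
     Imp (Box (Imp p q)) (Imp (Box p) (Box q)),
     Imp (Box p) p,
     Imp (Box p) (Box (Box p)),
     Imp (All (Imp p q)) (Imp (All p) (All q)),
     Imp (All p) p,
     Imp (Ex p) (All (Ex p)),
     Imp (Box (All p)) (All (Box p))}"

inductive_set MS4_plus :: "fm set \<Rightarrow> fm set" for G :: "fm set" where
  taut: "taut a \<Longrightarrow> a \<in> MS4_plus G"
| ax: "a \<in> MS4_axioms \<Longrightarrow> a \<in> MS4_plus G"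
| extra: "a \<in> G \<Longrightarrow> a \<in> MS4_plus G"
| mp: "Imp a b \<in> MS4_plus G \<Longrightarrow> a \<in> MS4_plus G \<Longrightarrow> b \<in> MS4_plus G"
| sub: "a \<in> MS4_plus G \<Longrightarrow> subst s a \<in> MS4_plus G"
| nec_box: "a \<in> MS4_plus G \<Longrightarrow> Box a \<in> MS4_plus G"
| nec_all: "a \<in> MS4_plus G \<Longrightarrow> All a \<in> MS4_plus G"

abbreviation MS4 :: "fm set" where "MS4 \<equiv> MS4_plus {}"

definition N :: "fm set" where
  "N = MS4_plus {Imp (Box (Ex p)) (Dia (Ex (Box p)))}"

end

(* The three extra axioms are interderivable over MS4 by substitution, propositional reasoning
   and replacement of provable equivalents (here Neg (Neg a) <-> a) under the modalities.
   Write B for Box (Ex p) --> Neg (Box (All (Neg (Box p)))) and C for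
   Box (All (Dia p)) --> Dia (All p). The N axiom is B with a double negation under the outer box.
   The contrapositive of C at Neg p is B with Neg (Neg p) for p under the inner box, and the
   contrapositive of B at Neg p is C with Neg (Neg p) for p under the universal modality. *)
theory Submission
  imports Defs
begin

lemma subst_Neg [simp]: "subst s (Neg a) = Neg (subst s a)"
  by (simp add: Neg_def)

lemma subst_Dia [simp]: "subst s (Dia a) = Dia (subst s a)"
  by (simp add: Dia_def)

lemma subst_Ex [simp]: "subst s (Ex a) = Ex (subst s a)"
  by (simp add: Ex_def)

lemma MS4_plus_subset:
  assumes "G \<subseteq> MS4_plus H"
  shows "MS4_plus G \<subseteq> MS4_plus H"
proof
  fix a assume "a \<in> MS4_plus G"
  then show "a \<in> MS4_plus H"
    by induction (use assms in \<open>auto intro: MS4_plus.intros\<close>)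
qed

lemma MS4_plus_eqI:
  assumes "G \<subseteq> MS4_plus H" and "H \<subseteq> MS4_plus G"
  shows "MS4_plus G = MS4_plus H"
  using assms by (intro equalityI MS4_plus_subset)

lemma MS4_plus_taut_mp2:
  "taut (Imp a (Imp b c)) \<Longrightarrow> a \<in> MS4_plus G \<Longrightarrow> b \<in> MS4_plus G \<Longrightarrow> c \<in> MS4_plus G"
  by (meson MS4_plus.mp MS4_plus.taut)

lemma MS4_plus_subst_extra: "subst s a \<in> MS4_plus {a}"
  by (intro MS4_plus.sub MS4_plus.extra) simp

lemma MS4_plus_Box_mono:
  assumes "Imp a b \<in> MS4_plus G"
  shows "Imp (Box a) (Box b) \<in> MS4_plus G"
proof -
  have "Imp (Box (Imp p q)) (Imp (Box p) (Box q)) \<in> MS4_plus G"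
    by (rule MS4_plus.ax) (simp add: MS4_axioms_def)
  from MS4_plus.sub[OF this, of "Var(0 := a, 1 := b)"]
  have "Imp (Box (Imp a b)) (Imp (Box a) (Box b)) \<in> MS4_plus G" by simp
  with MS4_plus.nec_box[OF assms] show ?thesis by (blast intro: MS4_plus.mp)
qed

lemma MS4_plus_All_mono:
  assumes "Imp a b \<in> MS4_plus G"
  shows "Imp (All a) (All b) \<in> MS4_plus G"
proof -
  have "Imp (All (Imp p q)) (Imp (All p) (All q)) \<in> MS4_plus G"
    by (rule MS4_plus.ax) (simp add: MS4_axioms_def)
  from MS4_plus.sub[OF this, of "Var(0 := a, 1 := b)"]
  have "Imp (All (Imp a b)) (Imp (All a) (All b)) \<in> MS4_plus G" by simp
  with MS4_plus.nec_all[OF assms] show ?thesis by (blast intro: MS4_plus.mp)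
qed

definition prov_equiv :: "fm set \<Rightarrow> fm \<Rightarrow> fm \<Rightarrow> bool" where
  "prov_equiv G a b \<longleftrightarrow> Imp a b \<in> MS4_plus G \<and> Imp b a \<in> MS4_plus G"

lemma prov_equiv_sym: "prov_equiv G a b \<Longrightarrow> prov_equiv G b a"
  by (simp add: prov_equiv_def)

lemma prov_equiv_trans [trans]:
  assumes "prov_equiv G a b" and "prov_equiv G b c"
  shows "prov_equiv G a c"
proof -
  have "taut (Imp (Imp x y) (Imp (Imp y z) (Imp x z)))" for x y z
    by (simp add: taut_def)
  with assms show ?thesis
    unfolding prov_equiv_def by (blast intro: MS4_plus_taut_mp2)
qed

lemma prov_equiv_tautI: "taut (Imp a b) \<Longrightarrow> taut (Imp b a) \<Longrightarrow> prov_equiv G a b"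
  by (simp add: prov_equiv_def MS4_plus.taut)

lemma prov_equiv_mp: "prov_equiv G a b \<Longrightarrow> a \<in> MS4_plus G \<Longrightarrow> b \<in> MS4_plus G"
  unfolding prov_equiv_def by (blast intro: MS4_plus.mp)

lemma prov_equiv_Imp:
  assumes "prov_equiv G a a'" and "prov_equiv G b b'"
  shows "prov_equiv G (Imp a b) (Imp a' b')"
proof -
  have "taut (Imp (Imp y x) (Imp (Imp u v) (Imp (Imp x u) (Imp y v))))" for x y u v
    by (simp add: taut_def)
  with assms show ?thesis
    unfolding prov_equiv_def by (blast intro: MS4_plus_taut_mp2)
qed

lemma prov_equiv_subst:
  assumes "\<And>n. prov_equiv G (s n) (t n)"
  shows "prov_equiv G (subst s a) (subst t a)"
proof (induction a)
  case Bot
  show ?case by (simp add: prov_equiv_tautI taut_def)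
next
  case (Box a)
  then show ?case by (simp add: prov_equiv_def MS4_plus_Box_mono)
next
  case (All a)
  then show ?case by (simp add: prov_equiv_def MS4_plus_All_mono)
qed (simp_all add: assms prov_equiv_Imp)

lemma prov_equiv_subst_Var_upd:
  assumes "prov_equiv G a b"
  shows "prov_equiv G (subst (Var(n := a)) c) (subst (Var(n := b)) c)"
  by (rule prov_equiv_subst) (simp add: assms prov_equiv_tautI taut_def)

lemma prov_equiv_Neg_Neg: "prov_equiv G (Neg (Neg a)) a"
  by (rule prov_equiv_tautI) (simp_all add: taut_def Neg_def)

lemma MS4_plus_singleton_cong:
  assumes "prov_equiv {} a b"
  shows "MS4_plus {a} = MS4_plus {b}"
proof -
  have "prov_equiv G a b" for G
    using assms MS4_plus_subset[of "{}" G] by (auto simp: prov_equiv_def)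
  then show ?thesis
    by (intro MS4_plus_eqI) (auto intro: prov_equiv_mp prov_equiv_sym MS4_plus.extra)
qed

lemma N_axiom_equiv:
  "prov_equiv G (Imp (Box (Ex p)) (Dia (Ex (Box p))))
                (Imp (Box (Ex p)) (Neg (Box (All (Neg (Box p))))))"
  using prov_equiv_subst_Var_upd[OF prov_equiv_Neg_Neg[of G "All (Neg (Box p))"],
      of 1 "Imp (Box (Ex p)) (Neg (Box q))"]
  by (simp add: Dia_def Ex_def)

lemma Box_Ex_axiom_in_MS4_plus_Box_All_Dia_axiom:
  "Imp (Box (Ex p)) (Neg (Box (All (Neg (Box p))))) \<in> MS4_plus {Imp (Box (All (Dia p))) (Dia (All p))}"
  (is "?b \<in> MS4_plus {?a}")
proof -
  let ?c = "Imp (Box (Ex p)) (Neg (Box (All (Neg (Box q)))))"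
  have "prov_equiv {?a} (subst (Var(0 := Neg p)) ?a) (subst (Var(1 := Neg (Neg p))) ?c)"
    by (rule prov_equiv_tautI) (auto simp: taut_def Dia_def Ex_def Neg_def)
  also have "prov_equiv {?a} \<dots> (subst (Var(1 := p)) ?c)"
    by (rule prov_equiv_subst_Var_upd[OF prov_equiv_Neg_Neg])
  finally have "prov_equiv {?a} (subst (Var(0 := Neg p)) ?a) ?b"
    by simp
  then show ?thesis
    using MS4_plus_subst_extra by (rule prov_equiv_mp)
qed

lemma Box_All_Dia_axiom_in_MS4_plus_Box_Ex_axiom:
  "Imp (Box (All (Dia p))) (Dia (All p)) \<in> MS4_plus {Imp (Box (Ex p)) (Neg (Box (All (Neg (Box p)))))}"
  (is "?b \<in> MS4_plus {?a}")
proof -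
  let ?c = "Imp (Box (All (Dia p))) (Dia (All q))"
  have "prov_equiv {?a} (subst (Var(0 := Neg p)) ?a) (subst (Var(1 := Neg (Neg p))) ?c)"
    by (rule prov_equiv_tautI) (auto simp: taut_def Dia_def Ex_def Neg_def)
  also have "prov_equiv {?a} \<dots> (subst (Var(1 := p)) ?c)"
    by (rule prov_equiv_subst_Var_upd[OF prov_equiv_Neg_Neg])
  finally have "prov_equiv {?a} (subst (Var(0 := Neg p)) ?a) ?b"
    by simp
  then show ?thesis
    using MS4_plus_subst_extra by (rule prov_equiv_mp)
qed

theorem lemma5p9:
  shows "N = MS4_plus {Imp (Box (Ex p)) (Neg (Box (All (Neg (Box p)))))}
       \<and> MS4_plus {Imp (Box (Ex p)) (Neg (Box (All (Neg (Box p)))))}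
           = MS4_plus {Imp (Box (All (Dia p))) (Dia (All p))}"
  unfolding N_def
  using MS4_plus_singleton_cong[OF N_axiom_equiv]
    MS4_plus_eqI[of "{Imp (Box (Ex p)) (Neg (Box (All (Neg (Box p)))))}"
                    "{Imp (Box (All (Dia p))) (Dia (All p))}"]
    Box_Ex_axiom_in_MS4_plus_Box_All_Dia_axiom Box_All_Dia_axiom_in_MS4_plus_Box_Ex_axiom
  by simp

end
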